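(* If a discrete Hecke pair $(G,H)$ has property (RD), then it is relatively unimodular, i.e. $L(g)=R(g)$ for all $g\in G$.
   Context: A discrete Hecke pair is a group $G$ with a subgroup $H$ such that $L(x):=[H:H\cap xHx^{-1}]<\infty$ for all $x\in G$; set $R(x):=L(x^{-1})$. The relative modular function is $\Delta_{(G,H)}(g)=L(g)/R(g)$, and $(G,H)$ is relatively unimodular if $\Delta_{(G,H)}\equiv1$. The Hecke algebra $\mathcal H(G,H)$ consists of finitely supported right $H$-invariant functions on $H\backslash G$ with product $f*g(Hx)=\sum_{Hy\in H\backslash G}f(Hxy^{-1})g(Hy)$, and $\lambda(f)\xi=f*\xi$ on $\ell^2(H\backslash G)$. A length function on $(G,H)$ is $l:G\to[0,\infty)$ with $l(e)=0$, $l(g)=l(g^{-1})$, $l(gh)\le l(g)+l(h)$ and $l|_H=0$. $(G,H)$ has property (RD) if there exist such $l$ and $s,c>0$ with $\|\lambda(f)\|\le c\big(\sum_{Hx\in H\backslash G}|f(Hx)|^2(1+l(x))^{2s}\big)^{1/2}$ for all $f\in\mathcal H(G,H)$. *)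

theory Defs
  imports "HOL-Analysis.Analysis" "HOL-Algebra.Coset"
begin

text \<open>Right cosets Hx are written H #> x; the coset space H\G is rcosets H.\<close>

definition coset_rep :: "'a set \<Rightarrow> 'a" where
  "coset_rep C = (SOME x. x \<in> C)"

definition hecke_L_cosets :: "('a, 'b) monoid_scheme \<Rightarrow> 'a set \<Rightarrow> 'a \<Rightarrow> 'a set set" where
  "hecke_L_cosets G H x =
     (\<lambda>h. (H \<inter> ((x <#\<^bsub>G\<^esub> H) #>\<^bsub>G\<^esub> inv\<^bsub>G\<^esub> x)) #>\<^bsub>G\<^esub> h) ` H"

definition hecke_L :: "('a, 'b) monoid_scheme \<Rightarrow> 'a set \<Rightarrow> 'a \<Rightarrow> nat" where
  "hecke_L G H x = card (hecke_L_cosets G H x)"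

definition hecke_R :: "('a, 'b) monoid_scheme \<Rightarrow> 'a set \<Rightarrow> 'a \<Rightarrow> nat" where
  "hecke_R G H x = hecke_L G H (inv\<^bsub>G\<^esub> x)"

definition hecke_pair :: "('a, 'b) monoid_scheme \<Rightarrow> 'a set \<Rightarrow> bool" where
  "hecke_pair G H \<longleftrightarrow> group G \<and> subgroup H G \<and>
     (\<forall>x \<in> carrier G. finite (hecke_L_cosets G H x))"

definition rel_modular :: "('a, 'b) monoid_scheme \<Rightarrow> 'a set \<Rightarrow> 'a \<Rightarrow> real" where
  "rel_modular G H g = real (hecke_L G H g) / real (hecke_R G H g)"

definition rel_unimodular :: "('a, 'b) monoid_scheme \<Rightarrow> 'a set \<Rightarrow> bool" where
  "rel_unimodular G H \<longleftrightarrow> (\<forall>g \<in> carrier G. rel_modular G H g = 1)"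

definition length_function :: "('a, 'b) monoid_scheme \<Rightarrow> 'a set \<Rightarrow> ('a \<Rightarrow> real) \<Rightarrow> bool" where
  "length_function G H l \<longleftrightarrow>
     (\<forall>g \<in> carrier G. l g \<ge> 0) \<and> l \<one>\<^bsub>G\<^esub> = 0 \<and>
     (\<forall>g \<in> carrier G. l g = l (inv\<^bsub>G\<^esub> g)) \<and>
     (\<forall>g \<in> carrier G. \<forall>h \<in> carrier G. l (g \<otimes>\<^bsub>G\<^esub> h) \<le> l g + l h) \<and>
     (\<forall>h \<in> H. l h = 0)"

definition hecke_algebra :: "('a, 'b) monoid_scheme \<Rightarrow> 'a set \<Rightarrow> ('a set \<Rightarrow> complex) set" where
  "hecke_algebra G H = {f. {C. f C \<noteq> 0} \<subseteq> rcosets\<^bsub>G\<^esub> H \<and> finite {C. f C \<noteq> 0} \<and>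
      (\<forall>C \<in> rcosets\<^bsub>G\<^esub> H. \<forall>h \<in> H. f (C #>\<^bsub>G\<^esub> h) = f C)}"

definition hecke_conv :: "('a, 'b) monoid_scheme \<Rightarrow> 'a set \<Rightarrow> ('a set \<Rightarrow> complex) \<Rightarrow> ('a set \<Rightarrow> complex) \<Rightarrow> 'a set \<Rightarrow> complex" where
  "hecke_conv G H f \<xi> C =
     (\<Sum>\<^sub>\<infinity>D \<in> rcosets\<^bsub>G\<^esub> H.
        f (H #>\<^bsub>G\<^esub> (coset_rep C \<otimes>\<^bsub>G\<^esub> inv\<^bsub>G\<^esub> coset_rep D)) * \<xi> D)"

definition in_l2 :: "('a, 'b) monoid_scheme \<Rightarrow> 'a set \<Rightarrow> ('a set \<Rightarrow> complex) \<Rightarrow> bool" where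
  "in_l2 G H \<xi> \<longleftrightarrow> (\<lambda>C. (cmod (\<xi> C))\<^sup>2) summable_on (rcosets\<^bsub>G\<^esub> H)"

definition l2_norm :: "('a, 'b) monoid_scheme \<Rightarrow> 'a set \<Rightarrow> ('a set \<Rightarrow> complex) \<Rightarrow> real" where
  "l2_norm G H \<xi> = sqrt (\<Sum>\<^sub>\<infinity>C \<in> rcosets\<^bsub>G\<^esub> H. (cmod (\<xi> C))\<^sup>2)"

text \<open>Property (RD): ||lambda(f)|| <= c * weighted l2 norm of f, written out via the
  operator norm: ||f * xi|| <= c * (...) * ||xi|| for every xi in l2(H\G).\<close>
definition has_RD :: "('a, 'b) monoid_scheme \<Rightarrow> 'a set \<Rightarrow> bool" where
  "has_RD G H \<longleftrightarrow> (\<exists>l s c. length_function G H l \<and> s > 0 \<and> c > 0 \<and>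
     (\<forall>f \<in> hecke_algebra G H. \<forall>\<xi>. in_l2 G H \<xi> \<longrightarrow>
        in_l2 G H (hecke_conv G H f \<xi>) \<and>
        l2_norm G H (hecke_conv G H f \<xi>) \<le>
          c * sqrt (\<Sum>C \<in> {C. f C \<noteq> 0}.
                (cmod (f C))\<^sup>2 * (1 + l (coset_rep C)) powr (2 * s))
            * l2_norm G H \<xi>))"

end

theory Submission
  imports Defs "HOL-Real_Asymp.Real_Asymp"
begin

text \<open>The relative modular function \<open>\<Delta> = L/R\<close> is a homomorphism: computing the index of
  \<open>H \<inter> xHx\<inverse> \<inter> xyH(xy)\<inverse>\<close> in each of the three conjugates of \<open>H\<close> along the two towers through
  the pairwise intersections yields \<open>L(x) L(y) R(xy) = L(xy) R(x) R(y)\<close>.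
  Testing the (RD) inequality on the indicator functions of the double cosets \<open>HxH\<close> and
  \<open>Hx\<inverse>H\<close> gives \<open>\<Delta>(x) \<le> c\<^sup>2 (1 + l(x))\<^sup>2\<^sup>s\<close>. For \<open>x = g\<^sup>n\<close> the left side is \<open>\<Delta>(g)\<^sup>n\<close> while
  \<open>l(g\<^sup>n) \<le> n l(g)\<close>, so an exponential is bounded by a polynomial in \<open>n\<close>, forcing \<open>\<Delta>(g) \<le> 1\<close>.
  Since \<open>\<Delta>(g\<inverse>) = \<Delta>(g)\<inverse>\<close>, \<open>\<Delta>\<close> is identically \<open>1\<close>.\<close>

lemma bij_betw_images_same_fibres:
  assumes "\<And>a b. a \<in> A \<Longrightarrow> b \<in> A \<Longrightarrow> f a = f b \<longleftrightarrow> g a = g b"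
  shows "bij_betw (g \<circ> inv_into A f) (f ` A) (g ` A)"
proof -
  have pick: "g (inv_into A f (f a)) = g a" "f (inv_into A g (g a)) = f a" if "a \<in> A" for a
    using assms[of "inv_into A f (f a)" a] assms[of "inv_into A g (g a)" a] that
      inv_into_into[of "f a" f A] f_inv_into_f[of "f a" f A]
      inv_into_into[of "g a" g A] f_inv_into_f[of "g a" g A]
    by auto
  show ?thesis
    by (rule bij_betw_byWitness[where f' = "f \<circ> inv_into A g"]) (auto simp: pick)
qed

lemma images_same_fibres:
  assumes "\<And>a b. a \<in> A \<Longrightarrow> b \<in> A \<Longrightarrow> f a = f b \<longleftrightarrow> g a = g b"
  shows "card (f ` A) = card (g ` A)" "finite (f ` A) \<longleftrightarrow> finite (g ` A)"
proof -
  have "bij_betw (g \<circ> inv_into A f) (f ` A) (g ` A)"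
    by (rule bij_betw_images_same_fibres) (rule assms)
  thus "card (f ` A) = card (g ` A)" "finite (f ` A) \<longleftrightarrow> finite (g ` A)"
    by (simp_all add: bij_betw_same_card bij_betw_finite)
qed

section \<open>Indices of subgroups\<close>

context group begin

lemma inv_mult_cancel_left [simp]: "x \<in> carrier G \<Longrightarrow> y \<in> carrier G \<Longrightarrow> inv x \<otimes> (x \<otimes> y) = y"
  by (simp add: m_assoc[symmetric])

lemma mult_inv_cancel_left [simp]: "x \<in> carrier G \<Longrightarrow> y \<in> carrier G \<Longrightarrow> x \<otimes> (inv x \<otimes> y) = y"
  by (simp add: m_assoc[symmetric])

lemma rcos_eq_iff:
  assumes "subgroup K G" "a \<in> carrier G" "b \<in> carrier G"
  shows "K #> a = K #> b \<longleftrightarrow> a \<otimes> inv b \<in> K"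
proof
  assume "K #> a = K #> b"
  then have "a \<in> K #> b" using rcos_self assms by metis
  thus "a \<otimes> inv b \<in> K" using subgroup.rcos_module_imp[OF assms(1) is_group assms(3)] by blast
next
  assume "a \<otimes> inv b \<in> K"
  then have "a \<in> K #> b" using subgroup.rcos_module_rev[OF assms(1) is_group assms(3,2)] by blast
  thus "K #> a = K #> b" using repr_independence assms by metis
qed

definition conj_set :: "'a \<Rightarrow> 'a set \<Rightarrow> 'a set" where
  "conj_set x M = {y \<in> carrier G. inv x \<otimes> y \<otimes> x \<in> M}"

lemma conj_set_subset_carrier: "conj_set x M \<subseteq> carrier G"
  by (auto simp: conj_set_def)

lemma conj_set_Int: "conj_set x (M \<inter> N) = conj_set x M \<inter> conj_set x N"
  by (auto simp: conj_set_def)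

lemma conj_set_conj_set:
  "x \<in> carrier G \<Longrightarrow> y \<in> carrier G \<Longrightarrow> conj_set x (conj_set y M) = conj_set (x \<otimes> y) M"
  by (auto simp: conj_set_def m_assoc inv_mult_group)

lemma conj_set_one: "M \<subseteq> carrier G \<Longrightarrow> conj_set \<one> M = M"
  by (auto simp: conj_set_def)

lemma conj_mem_conj_set_iff:
  "x \<in> carrier G \<Longrightarrow> a \<in> carrier G \<Longrightarrow> x \<otimes> a \<otimes> inv x \<in> conj_set x M \<longleftrightarrow> a \<in> M"
  by (simp add: conj_set_def m_assoc[symmetric]) (simp add: m_assoc)

lemma conj_set_eq_image:
  assumes "x \<in> carrier G" "M \<subseteq> carrier G"
  shows "conj_set x M = (\<lambda>a. x \<otimes> a \<otimes> inv x) ` M"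
proof
  show "conj_set x M \<subseteq> (\<lambda>a. x \<otimes> a \<otimes> inv x) ` M"
  proof
    fix y assume "y \<in> conj_set x M"
    then have y: "y \<in> carrier G" "inv x \<otimes> y \<otimes> x \<in> M" by (auto simp: conj_set_def)
    have "y = x \<otimes> (inv x \<otimes> y \<otimes> x) \<otimes> inv x" using y assms by (simp add: m_assoc)
    thus "y \<in> (\<lambda>a. x \<otimes> a \<otimes> inv x) ` M" using y(2) by blast
  qed
  show "(\<lambda>a. x \<otimes> a \<otimes> inv x) ` M \<subseteq> conj_set x M"
    using conj_mem_conj_set_iff assms by auto
qed

lemma conj_set_eq_cosets:
  assumes "x \<in> carrier G" "M \<subseteq> carrier G"
  shows "(x <# M) #> inv x = conj_set x M"
proof
  show "(x <# M) #> inv x \<subseteq> conj_set x M"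
    using assms conj_mem_conj_set_iff unfolding l_coset_def r_coset_def by (auto simp: subset_iff)
  show "conj_set x M \<subseteq> (x <# M) #> inv x"
    unfolding conj_set_eq_image[OF assms] l_coset_def r_coset_def by blast
qed

lemma subgroup_conj_set:
  assumes "subgroup M G" "x \<in> carrier G"
  shows "subgroup (conj_set x M) G"
proof (rule subgroupI)
  show "conj_set x M \<subseteq> carrier G" by (rule conj_set_subset_carrier)
  have "\<one> \<in> conj_set x M" using assms subgroup.one_closed[OF assms(1)] by (simp add: conj_set_def)
  thus "conj_set x M \<noteq> {}" by blast
next
  fix a assume "a \<in> conj_set x M"
  then have a: "a \<in> carrier G" "inv x \<otimes> a \<otimes> x \<in> M" by (auto simp: conj_set_def)
  have "inv x \<otimes> inv a \<otimes> x = inv (inv x \<otimes> a \<otimes> x)"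
    using a assms by (simp add: inv_mult_group m_assoc)
  also have "\<dots> \<in> M" using a subgroup.m_inv_closed[OF assms(1)] by blast
  finally show "inv a \<in> conj_set x M" using a unfolding conj_set_def by simp
next
  fix a b assume "a \<in> conj_set x M" "b \<in> conj_set x M"
  then have a: "a \<in> carrier G" "inv x \<otimes> a \<otimes> x \<in> M" "b \<in> carrier G" "inv x \<otimes> b \<otimes> x \<in> M"
    by (auto simp: conj_set_def)
  have "inv x \<otimes> (a \<otimes> b) \<otimes> x = (inv x \<otimes> a \<otimes> x) \<otimes> (inv x \<otimes> b \<otimes> x)"
    using a assms by (simp add: m_assoc)
  also have "\<dots> \<in> M" using a subgroup.m_closed[OF assms(1)] by blast
  finally show "a \<otimes> b \<in> conj_set x M" using a unfolding conj_set_def by simp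
qed

text \<open>\<^term>\<open>rcosets_in B A\<close> is \<open>B\A\<close>, so for \<open>B \<subseteq> A\<close> its cardinality is the index \<open>[A : B]\<close>.\<close>

definition rcosets_in :: "'a set \<Rightarrow> 'a set \<Rightarrow> 'a set set" where
  "rcosets_in B A = (\<lambda>a. B #> a) ` A"

lemma card_rcosets_in_pos:
  assumes "subgroup A G" "finite (rcosets_in B A)"
  shows "card (rcosets_in B A) > 0"
  using assms subgroup.one_closed[OF assms(1)] unfolding rcosets_in_def
  by (metis card_gt_0_iff empty_iff image_is_empty)

lemma set_mult_subgroup_absorb:
  assumes "subgroup D G" "subgroup B G" "D \<subseteq> B"
  shows "B <#> D = B"
proof
  show "B <#> D \<subseteq> B" unfolding set_mult_def using assms subgroup.m_closed[OF assms(2)] by blast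
  show "B \<subseteq> B <#> D"
  proof
    fix b assume b: "b \<in> B"
    have "b = b \<otimes> \<one>" using b subgroup.mem_carrier[OF assms(2)] by simp
    thus "b \<in> B <#> D" using b subgroup.one_closed[OF assms(1)] unfolding set_mult_def by blast
  qed
qed

text \<open>The tower law \<open>[A : D] = [A : B] [B : D]\<close>: the map \<open>D a \<mapsto> B a\<close> from \<open>D\A\<close> onto \<open>B\A\<close>
  has every fibre in bijection with \<open>D\B\<close>.\<close>

lemma index_mult:
  assumes D: "subgroup D G" and B: "subgroup B G" and A: "subgroup A G"
    and DB: "D \<subseteq> B" and BA: "B \<subseteq> A"
    and fin_BA: "finite (rcosets_in B A)" and fin_DB: "finite (rcosets_in D B)"
  shows "finite (rcosets_in D A)"
    "card (rcosets_in D A) = card (rcosets_in B A) * card (rcosets_in D B)"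
proof -
  have Ac: "A \<subseteq> carrier G" and Bc: "B \<subseteq> carrier G" and Dc: "D \<subseteq> carrier G"
    using A B D subgroup.subset by blast+
  define F where "F = (\<lambda>P. B <#> P)"
  have F_rcos: "F (D #> a) = B #> a" if "a \<in> A" for a
    unfolding F_def using setmult_rcos_assoc[OF Bc Dc] that Ac set_mult_subgroup_absorb[OF D B DB]
    by auto
  have F_onto: "F ` rcosets_in D A = rcosets_in B A"
    unfolding rcosets_in_def image_image using F_rcos by (simp cong: image_cong)
  have fibre: "{P \<in> rcosets_in D A. F P = B #> a0} = (\<lambda>b. D #> (b \<otimes> a0)) ` B"
    if a0: "a0 \<in> A" for a0
  proof -
    have "B #> a = B #> a0 \<longleftrightarrow> (\<exists>b\<in>B. a = b \<otimes> a0)" if "a \<in> A" for a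
    proof -
      have ac: "a \<in> carrier G" "a0 \<in> carrier G" using that a0 Ac by auto
      have "a = (a \<otimes> inv a0) \<otimes> a0" "(b \<otimes> a0) \<otimes> inv a0 = b" if "b \<in> carrier G" for b
        using ac that by (simp_all add: m_assoc)
      thus ?thesis using rcos_eq_iff[OF B ac] Bc by (metis subsetD)
    qed
    moreover have "b \<otimes> a0 \<in> A" if "b \<in> B" for b
      using that BA a0 subgroup.m_closed[OF A] by blast
    ultimately have "{a \<in> A. B #> a = B #> a0} = (\<lambda>b. b \<otimes> a0) ` B" by auto
    moreover have "{P \<in> rcosets_in D A. F P = B #> a0} = (\<lambda>a. D #> a) ` {a \<in> A. B #> a = B #> a0}"
      unfolding rcosets_in_def using F_rcos by auto
    ultimately show ?thesis by (simp add: image_image)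
  qed
  have fibre_card: "finite {P \<in> rcosets_in D A. F P = Q}
      \<and> card {P \<in> rcosets_in D A. F P = Q} = card (rcosets_in D B)" if Q: "Q \<in> rcosets_in B A" for Q
  proof -
    obtain a0 where a0: "a0 \<in> A" "Q = B #> a0" using Q unfolding rcosets_in_def by blast
    have "D #> (b \<otimes> a0) = D #> (b' \<otimes> a0) \<longleftrightarrow> D #> b = D #> b'" if "b \<in> B" "b' \<in> B" for b b'
    proof -
      have c: "b \<in> carrier G" "b' \<in> carrier G" "a0 \<in> carrier G" using that a0 Ac Bc by auto
      have "(b \<otimes> a0) \<otimes> inv (b' \<otimes> a0) = b \<otimes> inv b'" using c by (simp add: inv_mult_group m_assoc)
      thus ?thesis
        using rcos_eq_iff[OF D m_closed[OF c(1,3)] m_closed[OF c(2,3)]] rcos_eq_iff[OF D c(1,2)] by simp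
    qed
    then show ?thesis
      using images_same_fibres[of B "\<lambda>b. D #> (b \<otimes> a0)" "\<lambda>b. D #> b"] fin_DB fibre[OF a0(1)]
      unfolding rcosets_in_def a0(2) by simp
  qed
  have partition: "rcosets_in D A = (\<Union>Q \<in> rcosets_in B A. {P \<in> rcosets_in D A. F P = Q})"
    using F_onto by blast
  show "finite (rcosets_in D A)"
    by (subst partition) (use fin_BA fibre_card in \<open>blast intro: finite_UN_I\<close>)
  have "card (rcosets_in D A) = (\<Sum>Q \<in> rcosets_in B A. card {P \<in> rcosets_in D A. F P = Q})"
    by (subst partition, rule card_UN_disjoint) (use fin_BA fibre_card in auto)
  also have "\<dots> = card (rcosets_in B A) * card (rcosets_in D B)" using fibre_card by simp
  finally show "card (rcosets_in D A) = card (rcosets_in B A) * card (rcosets_in D B)" .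
qed

lemma index_Int_le:
  assumes E: "subgroup E G" and A: "subgroup A G" and C: "subgroup C G"
    and EA: "E \<subseteq> A" and fin: "finite (rcosets_in (A \<inter> C) A)"
  shows "finite (rcosets_in (E \<inter> C) E)" "card (rcosets_in (E \<inter> C) E) \<le> card (rcosets_in (A \<inter> C) A)"
proof -
  have EC: "subgroup (E \<inter> C) G" and AC: "subgroup (A \<inter> C) G"
    using subgroups_Inter_pair E A C by blast+
  have "(E \<inter> C) #> e = (E \<inter> C) #> e' \<longleftrightarrow> (A \<inter> C) #> e = (A \<inter> C) #> e'" if "e \<in> E" "e' \<in> E" for e e'
  proof -
    have c: "e \<in> carrier G" "e' \<in> carrier G" using that subgroup.subset[OF E] by auto
    have "e \<otimes> inv e' \<in> E" using that subgroup.m_closed[OF E] subgroup.m_inv_closed[OF E] by blast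
    thus ?thesis using EA rcos_eq_iff[OF EC c] rcos_eq_iff[OF AC c] by blast
  qed
  hence "card (rcosets_in (E \<inter> C) E) = card ((\<lambda>e. (A \<inter> C) #> e) ` E)"
     "finite (rcosets_in (E \<inter> C) E) = finite ((\<lambda>e. (A \<inter> C) #> e) ` E)"
    using images_same_fibres[of E "\<lambda>e. (E \<inter> C) #> e" "\<lambda>e. (A \<inter> C) #> e"] unfolding rcosets_in_def by auto
  moreover have "(\<lambda>e. (A \<inter> C) #> e) ` E \<subseteq> rcosets_in (A \<inter> C) A" unfolding rcosets_in_def using EA by blast
  ultimately show "finite (rcosets_in (E \<inter> C) E)" "card (rcosets_in (E \<inter> C) E) \<le> card (rcosets_in (A \<inter> C) A)"
    using fin by (metis card_mono finite_subset)+
qed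

lemma index_conj_set:
  assumes A: "subgroup A G" and B: "subgroup B G" and x: "x \<in> carrier G"
  shows "card (rcosets_in (conj_set x B) (conj_set x A)) = card (rcosets_in B A)"
    "finite (rcosets_in (conj_set x B) (conj_set x A)) \<longleftrightarrow> finite (rcosets_in B A)"
proof -
  have Ac: "A \<subseteq> carrier G" using subgroup.subset[OF A] .
  have xB: "subgroup (conj_set x B) G" using subgroup_conj_set[OF B x] .
  have "conj_set x B #> (x \<otimes> a \<otimes> inv x) = conj_set x B #> (x \<otimes> b \<otimes> inv x) \<longleftrightarrow> B #> a = B #> b"
    if "a \<in> A" "b \<in> A" for a b
  proof -
    have c: "a \<in> carrier G" "b \<in> carrier G" using that Ac by auto
    have "(x \<otimes> a \<otimes> inv x) \<otimes> inv (x \<otimes> b \<otimes> inv x) = x \<otimes> (a \<otimes> inv b) \<otimes> inv x"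
      using c x by (simp add: inv_mult_group m_assoc)
    thus ?thesis
      using rcos_eq_iff[OF xB] rcos_eq_iff[OF B c] conj_mem_conj_set_iff[OF x, of "a \<otimes> inv b" B] c x
      by simp
  qed
  thus "card (rcosets_in (conj_set x B) (conj_set x A)) = card (rcosets_in B A)"
    "finite (rcosets_in (conj_set x B) (conj_set x A)) \<longleftrightarrow> finite (rcosets_in B A)"
    using images_same_fibres[of A "\<lambda>a. conj_set x B #> (x \<otimes> a \<otimes> inv x)" "\<lambda>a. B #> a"]
    unfolding rcosets_in_def conj_set_eq_image[OF x Ac] image_image by auto
qed

lemma index_triangle:
  assumes A: "subgroup A G" and B: "subgroup B G" and C: "subgroup C G"
    and fin: "finite (rcosets_in (A \<inter> B) A)" "finite (rcosets_in (A \<inter> B) B)"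
      "finite (rcosets_in (A \<inter> C) A)" "finite (rcosets_in (A \<inter> C) C)"
      "finite (rcosets_in (B \<inter> C) B)" "finite (rcosets_in (B \<inter> C) C)"
  shows "card (rcosets_in (A \<inter> B) A) * card (rcosets_in (B \<inter> C) B) * card (rcosets_in (A \<inter> C) C)
       = card (rcosets_in (A \<inter> C) A) * card (rcosets_in (A \<inter> B) B) * card (rcosets_in (B \<inter> C) C)"
proof -
  define D where "D = A \<inter> B \<inter> C"
  have AB: "subgroup (A \<inter> B) G" and AC: "subgroup (A \<inter> C) G" and BC: "subgroup (B \<inter> C) G"
    and sD: "subgroup D G"
    unfolding D_def using subgroups_Inter_pair A B C by blast+
  have DAB: "D = (A \<inter> B) \<inter> C" and DAC: "D = (A \<inter> C) \<inter> B" and DBC: "D = (B \<inter> C) \<inter> A"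
    unfolding D_def by blast+
  have D_sub: "D \<subseteq> A \<inter> B" "D \<subseteq> A \<inter> C" "D \<subseteq> B \<inter> C" unfolding D_def by blast+
  have finP: "finite (rcosets_in D (A \<inter> B))"
    using index_Int_le(1)[OF AB A C _ fin(3)] unfolding DAB by blast
  have finQ: "finite (rcosets_in D (A \<inter> C))"
    using index_Int_le(1)[OF AC A B _ fin(1)] unfolding DAC by blast
  have finR: "finite (rcosets_in D (B \<inter> C))"
    using index_Int_le(1)[OF BC B A _] fin(2) unfolding DBC by (simp add: Int_commute)
  define x1 x2 where "x1 = card (rcosets_in (A \<inter> B) A)" "x2 = card (rcosets_in (A \<inter> C) A)"
  define y1 y2 where "y1 = card (rcosets_in (A \<inter> B) B)" "y2 = card (rcosets_in (B \<inter> C) B)"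
  define z1 z2 where "z1 = card (rcosets_in (A \<inter> C) C)" "z2 = card (rcosets_in (B \<inter> C) C)"
  define P Q R where "P = card (rcosets_in D (A \<inter> B))" "Q = card (rcosets_in D (A \<inter> C))"
    "R = card (rcosets_in D (B \<inter> C))"
  have PQR: "P * Q * R > 0" unfolding P_Q_R_def
    using card_rcosets_in_pos AB AC BC finP finQ finR by simp
  have x: "x1 * P = x2 * Q"
    using index_mult(2)[OF sD AB A D_sub(1) Int_lower1 fin(1) finP]
      index_mult(2)[OF sD AC A D_sub(2) Int_lower1 fin(3) finQ]
    unfolding x1_x2_def y1_y2_def z1_z2_def P_Q_R_def by simp
  have y: "y1 * P = y2 * R"
    using index_mult(2)[OF sD AB B D_sub(1) Int_lower2 fin(2) finP]
      index_mult(2)[OF sD BC B D_sub(3) Int_lower1 fin(5) finR]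
    unfolding x1_x2_def y1_y2_def z1_z2_def P_Q_R_def by simp
  have z: "z1 * Q = z2 * R"
    using index_mult(2)[OF sD AC C D_sub(2) Int_lower2 fin(4) finQ]
      index_mult(2)[OF sD BC C D_sub(3) Int_lower2 fin(6) finR]
    unfolding x1_x2_def y1_y2_def z1_z2_def P_Q_R_def by simp
  have "x1 * y2 * z1 * (P * Q * R) = (x1 * P) * (y2 * R) * (z1 * Q)" by (simp add: ac_simps)
  also have "\<dots> = (x2 * Q) * (y1 * P) * (z2 * R)" by (simp only: x y z)
  also have "\<dots> = x2 * y1 * z2 * (P * Q * R)" by (simp add: ac_simps)
  finally show ?thesis using PQR unfolding x1_x2_def y1_y2_def z1_z2_def by simp
qed

end

section \<open>Property (RD)\<close>

lemma le_square_if_le_mult_sqrt: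
  fixes a b :: real
  assumes "0 < a" "a \<le> b * sqrt a"
  shows "a \<le> b\<^sup>2"
proof -
  have sq: "sqrt a * sqrt a = a" using assms(1) by simp
  have "sqrt a \<le> b"
    by (rule mult_right_le_imp_le[of _ "sqrt a"]) (use assms sq in auto)
  hence "(sqrt a)\<^sup>2 \<le> b\<^sup>2" by (rule power_mono) (use assms(1) in simp)
  thus ?thesis using less_imp_le[OF assms(1)] by simp
qed

lemma exponential_exceeds_powr:
  fixes q b C p :: real
  assumes "q > 1" "b > 0" "C > 0"
  shows "\<exists>n. C * (1 + real n * b) powr p < q ^ n"
proof -
  have "\<forall>\<^sub>F n in sequentially. C * (1 + real n * b) powr p < q ^ n"
    using assms by real_asymp
  thus ?thesis by (rule eventually_happens'[OF sequentially_bot])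
qed

lemma has_sum_sq_norm_indicator:
  assumes "finite S" "S \<subseteq> A"
  shows "((\<lambda>C. (cmod (indicator S C :: complex))\<^sup>2) has_sum real (card S)) A"
  by (rule has_sum_finite_neutralI[OF assms]) (auto simp: indicator_def)

lemma in_l2_indicator:
  "finite S \<Longrightarrow> S \<subseteq> rcosets\<^bsub>G\<^esub> H \<Longrightarrow> in_l2 G H (indicator S)"
  unfolding in_l2_def by (rule has_sum_imp_summable[OF has_sum_sq_norm_indicator])

lemma l2_norm_indicator:
  "finite S \<Longrightarrow> S \<subseteq> rcosets\<^bsub>G\<^esub> H \<Longrightarrow> l2_norm G H (indicator S) = sqrt (real (card S))"
  unfolding l2_norm_def using infsumI[OF has_sum_sq_norm_indicator] by simp

lemma norm_le_l2_norm:
  assumes "in_l2 G H \<xi>" "C \<in> rcosets\<^bsub>G\<^esub> H"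
  shows "cmod (\<xi> C) \<le> l2_norm G H \<xi>"
proof -
  have "(\<Sum>\<^sub>\<infinity>D \<in> {C}. (cmod (\<xi> D))\<^sup>2) \<le> (\<Sum>\<^sub>\<infinity>D \<in> rcosets\<^bsub>G\<^esub> H. (cmod (\<xi> D))\<^sup>2)"
    by (rule infsum_mono_neutral) (use assms in \<open>auto simp: in_l2_def\<close>)
  hence "sqrt ((cmod (\<xi> C))\<^sup>2) \<le> sqrt (\<Sum>\<^sub>\<infinity>D \<in> rcosets\<^bsub>G\<^esub> H. (cmod (\<xi> D))\<^sup>2)"
    by (intro real_sqrt_le_mono) simp
  thus ?thesis unfolding l2_norm_def by simp
qed

lemma length_functionD:
  assumes "length_function G H l"
  shows "l \<one>\<^bsub>G\<^esub> = 0" "\<And>g. g \<in> carrier G \<Longrightarrow> 0 \<le> l g" "\<And>h. h \<in> H \<Longrightarrow> l h = 0"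
    "\<And>g h. g \<in> carrier G \<Longrightarrow> h \<in> carrier G \<Longrightarrow> l (g \<otimes>\<^bsub>G\<^esub> h) \<le> l g + l h"
  using assms unfolding length_function_def by blast+

definition sobolev_norm_sq :: "('a \<Rightarrow> real) \<Rightarrow> real \<Rightarrow> ('a set \<Rightarrow> complex) \<Rightarrow> real" where
  "sobolev_norm_sq l s f = (\<Sum>C \<in> {C. f C \<noteq> 0}. (cmod (f C))\<^sup>2 * (1 + l (coset_rep C)) powr (2 * s))"

definition RD_inequality :: "('a, 'b) monoid_scheme \<Rightarrow> 'a set \<Rightarrow> ('a \<Rightarrow> real) \<Rightarrow> real \<Rightarrow> real \<Rightarrow> bool"
  where "RD_inequality G H l s c \<longleftrightarrow>
    (\<forall>f \<in> hecke_algebra G H. \<forall>\<xi>. in_l2 G H \<xi> \<longrightarrow>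
        in_l2 G H (hecke_conv G H f \<xi>) \<and>
        l2_norm G H (hecke_conv G H f \<xi>) \<le> c * sqrt (sobolev_norm_sq l s f) * l2_norm G H \<xi>)"

lemma has_RD_iff:
  "has_RD G H \<longleftrightarrow> (\<exists>l s c. length_function G H l \<and> s > 0 \<and> c > 0 \<and> RD_inequality G H l s c)"
  unfolding has_RD_def RD_inequality_def sobolev_norm_sq_def ..

section \<open>The relative modular function is a homomorphism\<close>

locale discrete_hecke_pair = group G for G :: "('a, 'b) monoid_scheme" (structure) +
  fixes H :: "'a set"
  assumes subgroup_H: "subgroup H G"
    and finite_hecke_L_cosets: "x \<in> carrier G \<Longrightarrow> finite (hecke_L_cosets G H x)"

lemma discrete_hecke_pairI: "hecke_pair G H \<Longrightarrow> discrete_hecke_pair G H"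
  by (simp add: hecke_pair_def discrete_hecke_pair_def discrete_hecke_pair_axioms_def)

context discrete_hecke_pair begin

lemma H_subset_carrier: "H \<subseteq> carrier G"
  using subgroup.subset[OF subgroup_H] .

lemma hecke_L_cosets_eq: "x \<in> carrier G \<Longrightarrow> hecke_L_cosets G H x = rcosets_in (H \<inter> conj_set x H) H"
  unfolding hecke_L_cosets_def rcosets_in_def using conj_set_eq_cosets[OF _ H_subset_carrier] by simp

lemma finite_index_hecke_L: "x \<in> carrier G \<Longrightarrow> finite (rcosets_in (H \<inter> conj_set x H) H)"
  using finite_hecke_L_cosets hecke_L_cosets_eq by simp

lemma hecke_L_eq_index: "x \<in> carrier G \<Longrightarrow> hecke_L G H x = card (rcosets_in (H \<inter> conj_set x H) H)"
  unfolding hecke_L_def using hecke_L_cosets_eq by simp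

lemma hecke_L_pos: "x \<in> carrier G \<Longrightarrow> hecke_L G H x > 0"
  using hecke_L_eq_index finite_index_hecke_L card_rcosets_in_pos[OF subgroup_H] by simp

lemma hecke_R_pos: "x \<in> carrier G \<Longrightarrow> hecke_R G H x > 0"
  unfolding hecke_R_def by (simp add: hecke_L_pos)

lemma hecke_R_eq_index:
  assumes z: "z \<in> carrier G"
  shows "finite (rcosets_in (conj_set z H \<inter> H) (conj_set z H))"
    "hecke_R G H z = card (rcosets_in (conj_set z H \<inter> H) (conj_set z H))"
proof -
  have "conj_set z (H \<inter> conj_set (inv z) H) = conj_set z H \<inter> H"
    using conj_set_Int conj_set_conj_set[OF z inv_closed[OF z]] z conj_set_one[OF H_subset_carrier]
    by simp
  moreover have "subgroup (H \<inter> conj_set (inv z) H) G"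
    using subgroups_Inter_pair[OF subgroup_H subgroup_conj_set[OF subgroup_H]] z by simp
  ultimately show "finite (rcosets_in (conj_set z H \<inter> H) (conj_set z H))"
    "hecke_R G H z = card (rcosets_in (conj_set z H \<inter> H) (conj_set z H))"
    using index_conj_set[OF subgroup_H _ z, of "H \<inter> conj_set (inv z) H"] z
      finite_index_hecke_L[of "inv z"] hecke_L_eq_index[of "inv z"]
    unfolding hecke_R_def by simp_all
qed

lemma hecke_L_cocycle:
  assumes x: "x \<in> carrier G" and y: "y \<in> carrier G"
  shows "hecke_L G H x * hecke_L G H y * hecke_R G H (x \<otimes> y)
       = hecke_L G H (x \<otimes> y) * hecke_R G H x * hecke_R G H y"
proof -
  have xy: "x \<otimes> y \<in> carrier G" using x y by simp
  define B where "B = conj_set x H"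
  define C where "C = conj_set (x \<otimes> y) H"
  have sB: "subgroup B G" and sC: "subgroup C G"
    unfolding B_def C_def using subgroup_conj_set[OF subgroup_H] x xy by blast+
  have C_conj: "C = conj_set x (conj_set y H)" unfolding C_def using conj_set_conj_set[OF x y] by simp
  have sHy: "subgroup (H \<inter> conj_set y H) G" and syH: "subgroup (conj_set y H \<inter> H) G"
    using subgroups_Inter_pair subgroup_H subgroup_conj_set[OF subgroup_H y] by blast+
  have BC_L: "finite (rcosets_in (B \<inter> C) B)" "card (rcosets_in (B \<inter> C) B) = hecke_L G H y"
    using index_conj_set[OF subgroup_H sHy x] finite_index_hecke_L[OF y] hecke_L_eq_index[OF y]
    unfolding B_def C_conj conj_set_Int by simp_all
  have BC_R: "finite (rcosets_in (B \<inter> C) C)" "card (rcosets_in (B \<inter> C) C) = hecke_R G H y"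
    using index_conj_set[OF subgroup_conj_set[OF subgroup_H y] syH x] hecke_R_eq_index[OF y]
    unfolding B_def C_conj conj_set_Int by (simp_all add: Int_commute)
  have AB: "finite (rcosets_in (H \<inter> B) H)" "card (rcosets_in (H \<inter> B) H) = hecke_L G H x"
    "finite (rcosets_in (H \<inter> B) B)" "card (rcosets_in (H \<inter> B) B) = hecke_R G H x"
    unfolding B_def using finite_index_hecke_L[OF x] hecke_L_eq_index[OF x] hecke_R_eq_index[OF x]
    by (simp_all add: Int_commute)
  have AC: "finite (rcosets_in (H \<inter> C) H)" "card (rcosets_in (H \<inter> C) H) = hecke_L G H (x \<otimes> y)"
    "finite (rcosets_in (H \<inter> C) C)" "card (rcosets_in (H \<inter> C) C) = hecke_R G H (x \<otimes> y)"
    unfolding C_def using finite_index_hecke_L[OF xy] hecke_L_eq_index[OF xy] hecke_R_eq_index[OF xy]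
    by (simp_all add: Int_commute)
  show ?thesis
    using index_triangle[OF subgroup_H sB sC AB(1,3) AC(1,3) BC_L(1) BC_R(1)]
    unfolding AB(2,4) AC(2,4) BC_L(2) BC_R(2) by (simp add: ac_simps)
qed

lemma rel_modular_mult:
  assumes "x \<in> carrier G" "y \<in> carrier G"
  shows "rel_modular G H (x \<otimes> y) = rel_modular G H x * rel_modular G H y"
proof -
  have "real (hecke_L G H x * hecke_L G H y * hecke_R G H (x \<otimes> y))
      = real (hecke_L G H (x \<otimes> y) * hecke_R G H x * hecke_R G H y)"
    using hecke_L_cocycle[OF assms] by simp
  thus ?thesis
    using hecke_R_pos assms unfolding rel_modular_def by (simp add: field_simps)
qed

lemma rel_modular_pow: "g \<in> carrier G \<Longrightarrow> rel_modular G H (g [^] n) = rel_modular G H g ^ n"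
proof (induction n)
  case 0
  have "rel_modular G H \<one> = 1"
    using hecke_L_pos[of \<one>] unfolding rel_modular_def hecke_R_def by simp
  thus ?case by simp
next
  case (Suc n)
  thus ?case using rel_modular_mult[of "g [^] n" g] by simp
qed

lemma rel_modular_inv: "g \<in> carrier G \<Longrightarrow> rel_modular G H (inv g) = inverse (rel_modular G H g)"
  unfolding rel_modular_def hecke_R_def by simp

section \<open>Testing (RD) on double cosets\<close>

lemma length_function_pow:
  assumes l: "length_function G H l" and g: "g \<in> carrier G"
  shows "l (g [^] n) \<le> real n * l g"
proof (induction n)
  case 0
  thus ?case using length_functionD(1)[OF l] by simp
next
  case (Suc n)
  have "l (g [^] Suc n) \<le> l (g [^] n) + l g"
    using length_functionD(4)[OF l] g by simp
  thus ?case using Suc.IH by (simp add: algebra_simps)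
qed

lemma length_function_double_coset_le:
  assumes l: "length_function G H l" and x: "x \<in> carrier G" and h: "h1 \<in> H" "h2 \<in> H"
  shows "l (h1 \<otimes> x \<otimes> h2) \<le> l x"
proof -
  have hc: "h1 \<in> carrier G" "h2 \<in> carrier G" using h H_subset_carrier by auto
  have "l (h1 \<otimes> x \<otimes> h2) \<le> l (h1 \<otimes> x) + l h2" using length_functionD(4)[OF l] hc x by simp
  also have "\<dots> \<le> l h1 + l x + l h2" using length_functionD(4)[OF l] hc x by simp
  also have "\<dots> = l x" using length_functionD(3)[OF l] h by simp
  finally show ?thesis .
qed

definition double_coset_rcosets :: "'a \<Rightarrow> 'a set set" where
  "double_coset_rcosets x = (\<lambda>h. H #> (x \<otimes> h)) ` H"

lemma double_coset_rcosets_subset: "x \<in> carrier G \<Longrightarrow> double_coset_rcosets x \<subseteq> rcosets H"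
  unfolding double_coset_rcosets_def using H_subset_carrier by (auto intro!: rcosetsI)

lemma mem_double_coset_rcosets_iff:
  assumes x: "x \<in> carrier G" and b: "b \<in> carrier G"
  shows "H #> b \<in> double_coset_rcosets x \<longleftrightarrow> (\<exists>h1\<in>H. \<exists>h2\<in>H. b = h1 \<otimes> x \<otimes> h2)"
proof -
  have "H #> b = H #> (x \<otimes> h) \<longleftrightarrow> (\<exists>h1\<in>H. b = h1 \<otimes> x \<otimes> h)" if h: "h \<in> H" for h
  proof
    have hc: "h \<in> carrier G" using h H_subset_carrier by auto
    assume "H #> b = H #> (x \<otimes> h)"
    hence "b \<otimes> inv (x \<otimes> h) \<in> H" using rcos_eq_iff[OF subgroup_H b] x hc by simp
    moreover have "b = (b \<otimes> inv (x \<otimes> h)) \<otimes> x \<otimes> h" using x b hc by (simp add: m_assoc)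
    ultimately show "\<exists>h1\<in>H. b = h1 \<otimes> x \<otimes> h" by blast
  next
    have hc: "h \<in> carrier G" using h H_subset_carrier by auto
    assume "\<exists>h1\<in>H. b = h1 \<otimes> x \<otimes> h"
    then obtain h1 where h1: "h1 \<in> H" "b = h1 \<otimes> x \<otimes> h" by blast
    hence "b \<otimes> inv (x \<otimes> h) = h1" using x hc H_subset_carrier by (auto simp: m_assoc inv_mult_group)
    thus "H #> b = H #> (x \<otimes> h)" using rcos_eq_iff[OF subgroup_H b] x hc h1(1) by simp
  qed
  thus ?thesis unfolding double_coset_rcosets_def by blast
qed

lemma coset_rep_double_coset:
  assumes x: "x \<in> carrier G" and C: "C \<in> double_coset_rcosets x"
  obtains h1 h2 where "h1 \<in> H" "h2 \<in> H" "coset_rep C = h1 \<otimes> x \<otimes> h2"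
proof -
  obtain h where h: "h \<in> H" "C = H #> (x \<otimes> h)" using C unfolding double_coset_rcosets_def by blast
  have "x \<otimes> h \<in> C" using h x H_subset_carrier rcos_self[OF _ subgroup_H] by auto
  hence "coset_rep C \<in> C" unfolding coset_rep_def by (rule someI)
  then obtain h1 where h1: "h1 \<in> H" "coset_rep C = h1 \<otimes> (x \<otimes> h)"
    using h(2) unfolding r_coset_def by blast
  show ?thesis
    by (rule that[OF h1(1) h(1)]) (use h1 h x H_subset_carrier in \<open>simp add: m_assoc subset_iff\<close>)
qed

lemma double_coset_rcosets_right_invariant:
  assumes x: "x \<in> carrier G" and C: "C \<in> rcosets H" and h: "h \<in> H"
  shows "C #> h \<in> double_coset_rcosets x \<longleftrightarrow> C \<in> double_coset_rcosets x"
proof -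
  obtain a where a: "a \<in> carrier G" "C = H #> a" using C unfolding RCOSETS_def by blast
  have hc: "h \<in> carrier G" and H_mult: "\<And>u v. u \<in> H \<Longrightarrow> v \<in> H \<Longrightarrow> u \<otimes> v \<in> H"
    and H_inv: "\<And>u. u \<in> H \<Longrightarrow> inv u \<in> H"
    using h H_subset_carrier subgroup.m_closed[OF subgroup_H] subgroup.m_inv_closed[OF subgroup_H] by auto
  have "(\<exists>h1\<in>H. \<exists>h2\<in>H. a \<otimes> h = h1 \<otimes> x \<otimes> h2) \<longleftrightarrow> (\<exists>h1\<in>H. \<exists>h2\<in>H. a = h1 \<otimes> x \<otimes> h2)"
  proof
    assume "\<exists>h1\<in>H. \<exists>h2\<in>H. a \<otimes> h = h1 \<otimes> x \<otimes> h2"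
    then obtain h1 h2 where hh: "h1 \<in> H" "h2 \<in> H" "a \<otimes> h = h1 \<otimes> x \<otimes> h2" by blast
    have hhc: "h1 \<in> carrier G" "h2 \<in> carrier G" using hh H_subset_carrier by auto
    have "a = (a \<otimes> h) \<otimes> inv h" using a hc by (simp add: m_assoc)
    also have "\<dots> = h1 \<otimes> x \<otimes> (h2 \<otimes> inv h)" using hh(3) hhc x hc by (simp add: m_assoc)
    finally show "\<exists>h1\<in>H. \<exists>h2\<in>H. a = h1 \<otimes> x \<otimes> h2"
      using hh(1) H_mult[OF hh(2) H_inv[OF h]] by blast
  next
    assume "\<exists>h1\<in>H. \<exists>h2\<in>H. a = h1 \<otimes> x \<otimes> h2"
    then obtain h1 h2 where hh: "h1 \<in> H" "h2 \<in> H" "a = h1 \<otimes> x \<otimes> h2" by blast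
    have hhc: "h1 \<in> carrier G" "h2 \<in> carrier G" using hh H_subset_carrier by auto
    have "a \<otimes> h = h1 \<otimes> x \<otimes> (h2 \<otimes> h)" using hh(3) hhc x hc by (simp add: m_assoc)
    thus "\<exists>h1\<in>H. \<exists>h2\<in>H. a \<otimes> h = h1 \<otimes> x \<otimes> h2" using hh(1) H_mult[OF hh(2) h] by blast
  qed
  thus ?thesis
    unfolding a(2) coset_mult_assoc[OF H_subset_carrier a(1) hc]
    using mem_double_coset_rcosets_iff[OF x] a(1) hc by simp
qed

lemma card_double_coset_rcosets:
  assumes x: "x \<in> carrier G"
  shows "finite (double_coset_rcosets x)" "card (double_coset_rcosets x) = hecke_R G H x"
proof -
  define K where "K = H \<inter> conj_set (inv x) H"
  have K: "subgroup K G"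
    unfolding K_def using subgroups_Inter_pair subgroup_H subgroup_conj_set x by simp
  have "H #> (x \<otimes> h) = H #> (x \<otimes> h') \<longleftrightarrow> K #> h = K #> h'" if hh: "h \<in> H" "h' \<in> H" for h h'
  proof -
    have c: "h \<in> carrier G" "h' \<in> carrier G" using hh H_subset_carrier by auto
    have "(x \<otimes> h) \<otimes> inv (x \<otimes> h') = x \<otimes> (h \<otimes> inv h') \<otimes> inv x"
      using c x by (simp add: inv_mult_group m_assoc)
    hence "H #> (x \<otimes> h) = H #> (x \<otimes> h') \<longleftrightarrow> x \<otimes> (h \<otimes> inv h') \<otimes> inv x \<in> H"
      using rcos_eq_iff[OF subgroup_H m_closed[OF x c(1)] m_closed[OF x c(2)]] by simp
    also have "\<dots> \<longleftrightarrow> h \<otimes> inv h' \<in> K"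
      using hh subgroup.m_closed[OF subgroup_H] subgroup.m_inv_closed[OF subgroup_H] c x
      by (simp add: K_def conj_set_def)
    also have "\<dots> \<longleftrightarrow> K #> h = K #> h'" using rcos_eq_iff[OF K c] by simp
    finally show ?thesis .
  qed
  note fibres = images_same_fibres[of H "\<lambda>h. H #> (x \<otimes> h)" "\<lambda>h. K #> h", OF this]
  have "card (double_coset_rcosets x) = card (rcosets_in K H)"
    "finite (double_coset_rcosets x) \<longleftrightarrow> finite (rcosets_in K H)"
    using fibres unfolding double_coset_rcosets_def rcosets_in_def by simp_all
  moreover have "finite (rcosets_in K H)" "card (rcosets_in K H) = hecke_R G H x"
    unfolding K_def hecke_R_def using finite_index_hecke_L[of "inv x"] hecke_L_eq_index[of "inv x"] x
    by simp_all
  ultimately show "finite (double_coset_rcosets x)" "card (double_coset_rcosets x) = hecke_R G H x"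
    by simp_all
qed

lemma indicator_double_coset_in_hecke_algebra:
  assumes x: "x \<in> carrier G"
  shows "indicator (double_coset_rcosets x) \<in> hecke_algebra G H"
proof -
  have "{C. (indicator (double_coset_rcosets x) C :: complex) \<noteq> 0} = double_coset_rcosets x"
    by (auto simp: indicator_def)
  thus ?thesis
    unfolding hecke_algebra_def
    using double_coset_rcosets_subset[OF x] card_double_coset_rcosets(1)[OF x]
      double_coset_rcosets_right_invariant[OF x]
    by (simp add: indicator_def)
qed

lemma hecke_conv_indicator_double_cosets:
  assumes x: "x \<in> carrier G"
  shows "hecke_conv G H (indicator (double_coset_rcosets x)) (indicator (double_coset_rcosets (inv x))) H
       = of_nat (hecke_L G H x)"
proof -
  define S where "S = double_coset_rcosets (inv x)"
  have ix: "inv x \<in> carrier G" using x by simp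
  have r0: "coset_rep H \<in> H"
    unfolding coset_rep_def by (rule someI[of _ \<one>]) (rule subgroup.one_closed[OF subgroup_H])
  have in_T: "indicator (double_coset_rcosets x) (H #> (coset_rep H \<otimes> inv (coset_rep D))) = (1 :: complex)"
    if D: "D \<in> S" for D
  proof -
    obtain h1 h2 where h: "h1 \<in> H" "h2 \<in> H" "coset_rep D = h1 \<otimes> inv x \<otimes> h2"
      using coset_rep_double_coset[OF ix] D unfolding S_def by blast
    have hc: "h1 \<in> carrier G" "h2 \<in> carrier G" "coset_rep H \<in> carrier G"
      using h r0 H_subset_carrier by auto
    have "coset_rep H \<otimes> inv (coset_rep D) = (coset_rep H \<otimes> inv h2) \<otimes> x \<otimes> inv h1"
      unfolding h(3) using hc x by (simp add: inv_mult_group m_assoc)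
    moreover have "coset_rep H \<otimes> inv h2 \<in> H" "inv h1 \<in> H"
      using h r0 subgroup.m_closed[OF subgroup_H] subgroup.m_inv_closed[OF subgroup_H] by blast+
    ultimately have "H #> (coset_rep H \<otimes> inv (coset_rep D)) \<in> double_coset_rcosets x"
      using mem_double_coset_rcosets_iff[OF x] hc x by auto
    thus ?thesis by simp
  qed
  have "hecke_conv G H (indicator (double_coset_rcosets x)) (indicator S) H
      = (\<Sum>D \<in> S. indicator (double_coset_rcosets x) (H #> (coset_rep H \<otimes> inv (coset_rep D)))
                  * indicator S D)"
    unfolding hecke_conv_def
    by (rule infsumI, rule has_sum_finite_neutralI)
      (use card_double_coset_rcosets(1)[OF ix] double_coset_rcosets_subset[OF ix] in \<open>auto simp: S_def\<close>)
  also have "\<dots> = of_nat (card S)" using in_T by simp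
  also have "card S = hecke_L G H x"
    using card_double_coset_rcosets(2)[OF ix] x unfolding S_def hecke_R_def by simp
  finally show ?thesis unfolding S_def .
qed

lemma sobolev_norm_sq_indicator_double_coset_le:
  assumes l: "length_function G H l" and s: "0 \<le> s" and x: "x \<in> carrier G"
  shows "sobolev_norm_sq l s (indicator (double_coset_rcosets x))
       \<le> real (hecke_R G H x) * (1 + l x) powr (2 * s)"
proof -
  define T where "T = double_coset_rcosets x"
  have bound: "(1 + l (coset_rep C)) powr (2 * s) \<le> (1 + l x) powr (2 * s)" if C: "C \<in> T" for C
  proof -
    obtain h1 h2 where h: "h1 \<in> H" "h2 \<in> H" "coset_rep C = h1 \<otimes> x \<otimes> h2"
      using coset_rep_double_coset[OF x] C unfolding T_def by blast
    have "h1 \<otimes> x \<otimes> h2 \<in> carrier G" using h x H_subset_carrier by auto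
    hence "0 \<le> l (coset_rep C)" using length_functionD(2)[OF l] h(3) by simp
    thus ?thesis
      unfolding h(3) using length_function_double_coset_le[OF l x h(1,2)] s by (intro powr_mono2) auto
  qed
  have supp: "{C. (indicator T C :: complex) \<noteq> 0} = T" by (auto simp: indicator_def)
  have "sobolev_norm_sq l s (indicator T) = (\<Sum>C \<in> T. (1 + l (coset_rep C)) powr (2 * s))"
    unfolding sobolev_norm_sq_def supp by (rule sum.cong) (simp_all add: indicator_def)
  also have "\<dots> \<le> (\<Sum>C \<in> T. (1 + l x) powr (2 * s))" by (rule sum_mono) (rule bound)
  also have "\<dots> = real (hecke_R G H x) * (1 + l x) powr (2 * s)"
    using card_double_coset_rcosets(2)[OF x] unfolding T_def by simp
  finally show ?thesis unfolding T_def .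
qed

lemma rel_modular_le_RD:
  assumes l: "length_function G H l" and s: "0 \<le> s" and c: "0 \<le> c"
    and RD: "RD_inequality G H l s c" and x: "x \<in> carrier G"
  shows "rel_modular G H x \<le> c\<^sup>2 * (1 + l x) powr (2 * s)"
proof -
  define f where "f = (indicator (double_coset_rcosets x) :: 'a set \<Rightarrow> complex)"
  define \<xi> where "\<xi> = (indicator (double_coset_rcosets (inv x)) :: 'a set \<Rightarrow> complex)"
  define P where "P = (1 + l x) powr (2 * s)"
  have ix: "inv x \<in> carrier G" using x by simp
  have "card (double_coset_rcosets (inv x)) = hecke_L G H x"
    using card_double_coset_rcosets(2)[OF ix] x by (simp add: hecke_R_def)
  hence \<xi>: "in_l2 G H \<xi>" "l2_norm G H \<xi> = sqrt (real (hecke_L G H x))"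
    unfolding \<xi>_def
    using in_l2_indicator[OF card_double_coset_rcosets(1)[OF ix] double_coset_rcosets_subset[OF ix]]
      l2_norm_indicator[OF card_double_coset_rcosets(1)[OF ix] double_coset_rcosets_subset[OF ix]]
    by simp_all
  have RDx: "in_l2 G H (hecke_conv G H f \<xi>)"
    "l2_norm G H (hecke_conv G H f \<xi>) \<le> c * sqrt (sobolev_norm_sq l s f) * l2_norm G H \<xi>"
    using RD indicator_double_coset_in_hecke_algebra[OF x] \<xi>(1) unfolding RD_inequality_def f_def by blast+
  have H_coset: "H \<in> rcosets H"
    using rcosetsI[OF H_subset_carrier one_closed] coset_mult_one[OF H_subset_carrier] by simp
  have "real (hecke_L G H x) \<le> l2_norm G H (hecke_conv G H f \<xi>)"
    using norm_le_l2_norm[OF RDx(1) H_coset] hecke_conv_indicator_double_cosets[OF x]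
    unfolding f_def \<xi>_def by simp
  also have "\<dots> \<le> c * sqrt (sobolev_norm_sq l s f) * sqrt (real (hecke_L G H x))"
    using RDx(2) unfolding \<xi>(2) .
  also have "\<dots> \<le> c * sqrt (real (hecke_R G H x) * P) * sqrt (real (hecke_L G H x))"
    unfolding f_def P_def
    by (intro mult_right_mono mult_left_mono real_sqrt_le_mono sobolev_norm_sq_indicator_double_coset_le l s x)
      (use c in auto)
  finally have "real (hecke_L G H x) \<le> (c * sqrt (real (hecke_R G H x) * P))\<^sup>2"
    using le_square_if_le_mult_sqrt hecke_L_pos[OF x] by simp
  also have "\<dots> = c\<^sup>2 * P * real (hecke_R G H x)"
    using hecke_R_pos[OF x] unfolding P_def by (simp add: power_mult_distrib)
  finally show ?thesis
    unfolding rel_modular_def P_def using hecke_R_pos[OF x] by (simp add: divide_le_eq)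
qed

lemma rel_modular_le_one:
  assumes l: "length_function G H l" and s: "0 \<le> s" and c: "0 < c"
    and RD: "RD_inequality G H l s c" and g: "g \<in> carrier G"
  shows "rel_modular G H g \<le> 1"
proof (rule ccontr)
  assume "\<not> rel_modular G H g \<le> 1"
  hence q: "rel_modular G H g > 1" by simp
  define b where "b = l g + 1"
  have b: "b > 0" unfolding b_def using length_functionD(2)[OF l g] by simp
  obtain n where n: "c\<^sup>2 * (1 + real n * b) powr (2 * s) < rel_modular G H g ^ n"
    using exponential_exceeds_powr[OF q b] c by force
  have gn: "g [^] n \<in> carrier G" using g by simp
  have "l (g [^] n) \<le> real n * b"
    using length_function_pow[OF l g, of n] unfolding b_def by (simp add: algebra_simps)
  hence "(1 + l (g [^] n)) powr (2 * s) \<le> (1 + real n * b) powr (2 * s)"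
    using length_functionD(2)[OF l gn] s by (intro powr_mono2) auto
  hence "c\<^sup>2 * (1 + l (g [^] n)) powr (2 * s) \<le> c\<^sup>2 * (1 + real n * b) powr (2 * s)"
    by (rule mult_left_mono) simp
  moreover have "rel_modular G H g ^ n \<le> c\<^sup>2 * (1 + l (g [^] n)) powr (2 * s)"
    using rel_modular_le_RD[OF l s less_imp_le[OF c] RD gn] rel_modular_pow[OF g] by simp
  ultimately show False using n by simp
qed

lemma rel_unimodular_if_le_one:
  assumes "\<And>g. g \<in> carrier G \<Longrightarrow> rel_modular G H g \<le> 1"
  shows "rel_unimodular G H"
  unfolding rel_unimodular_def
proof
  fix g assume g: "g \<in> carrier G"
  have "inverse (rel_modular G H g) \<le> 1" using assms[of "inv g"] rel_modular_inv[OF g] g by simp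
  moreover have "rel_modular G H g > 0"
    unfolding rel_modular_def using hecke_L_pos[OF g] hecke_R_pos[OF g] by simp
  ultimately show "rel_modular G H g = 1" using assms[OF g] by (simp add: field_simps)
qed

lemma hecke_L_eq_hecke_R_if_rel_unimodular:
  "rel_unimodular G H \<Longrightarrow> g \<in> carrier G \<Longrightarrow> hecke_L G H g = hecke_R G H g"
  unfolding rel_unimodular_def rel_modular_def using hecke_R_pos by fastforce

end

theorem corollary3p13:
  fixes G :: "('a, 'b) monoid_scheme" and H :: "'a set"
  assumes "hecke_pair G H" and "has_RD G H"
  shows "rel_unimodular G H \<and> (\<forall>g \<in> carrier G. hecke_L G H g = hecke_R G H g)"
proof -
  interpret discrete_hecke_pair G H using assms(1) by (rule discrete_hecke_pairI)
  obtain l s c where l: "length_function G H l" and s: "s > 0" and c: "c > 0"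
    and RD: "RD_inequality G H l s c"
    using assms(2) unfolding has_RD_iff by blast
  have "rel_unimodular G H"
    by (rule rel_unimodular_if_le_one, rule rel_modular_le_one[OF l less_imp_le[OF s] c RD])
  thus ?thesis using hecke_L_eq_hecke_R_if_rel_unimodular by blast
qed

end
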